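(* Let $d\ge1$, $c\in C(d,2,p)$, and $0\le a\le d$. Then the monomial $x^ay^{d-a}$ has carry pattern $\le c$ if and only if $a\in A^c$, where $A^c=\{a: 0\le a\le d,\ \mathrm{Cont}(a_{[t_r,t_{r+1})})\le\mathrm{Cont}(\delta_{t_r})\text{ for all }0\le r\le\ell\}$.
   Context: $p$ prime. Base-$p$ expansion $d=\sum_{j=0}^Md_jp^j$, $d_M\ne0$, digits in $[0,p-1]$. The carry pattern $(c_1,\dots,c_M)$ of $x^ay^b$ ($a+b=d$) is determined by $\sum_{j<\ell}(a_j+b_j)p^j=c_\ell p^\ell+\sum_{j<\ell}d_jp^j$ for $1\le\ell\le M$ ($c_i=0$ for $i<1$, $i>M$). $C(d,2,p)$ is the set of such carry patterns, ordered componentwise. $\mathcal Z(c,d)=\{0\le k\le M: c_k=0,\ (c_{k-1},d_{k-1})\ne(0,p-1)\}$, with the convention $0\in\mathcal Z(c,d)$, written $\{0=t_0<\dots<t_\ell\}$, and $t_{\ell+1}=M+1$. For an integer $a\ge0$ with base-$p$ digits $a_j$, $a_{[t_r,t_{r+1})}=(a_{t_r},\dots,a_{t_{r+1}-1})$ and $\mathrm{Cont}(a_{[t_r,t_{r+1})})=\sum_{k=t_r}^{t_{r+1}-1}a_kp^{k-t_r}$; $\delta_{t_r}=d_{[t_r,t_{r+1})}$. *)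

theory Defs
  imports "HOL-Computational_Algebra.Primes"
begin

definition digit :: "nat \<Rightarrow> nat \<Rightarrow> nat \<Rightarrow> nat" where
  "digit p a j = a div p ^ j mod p"

definition topIdx :: "nat \<Rightarrow> nat \<Rightarrow> nat" where
  "topIdx p d = Max {j. digit p d j \<noteq> 0}"

text \<open>Carry pattern of x^a y^b with a + b = d (b = d - a), as a function of the
  index l; c_l for 1 \<le> l \<le> M is the unique number with
  sum_{j<l} (a_j+b_j) p^j = c_l p^l + sum_{j<l} d_j p^j, and c_l = 0 otherwise.\<close>
definition carry :: "nat \<Rightarrow> nat \<Rightarrow> nat \<Rightarrow> nat \<Rightarrow> nat" where
  "carry p d a l =
     (if 1 \<le> l \<and> l \<le> topIdx p d then
        ((\<Sum>j<l. (digit p a j + digit p (d - a) j) * p ^ j) - (\<Sum>j<l. digit p d j * p ^ j)) div p ^ l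
      else 0)"

definition carryPatterns :: "nat \<Rightarrow> nat \<Rightarrow> (nat \<Rightarrow> nat) set" where
  "carryPatterns d p = {carry p d a | a. a \<le> d}"

definition carry_le :: "(nat \<Rightarrow> nat) \<Rightarrow> (nat \<Rightarrow> nat) \<Rightarrow> bool" where
  "carry_le c c' \<longleftrightarrow> (\<forall>k. c k \<le> c' k)"

definition Zset :: "nat \<Rightarrow> (nat \<Rightarrow> nat) \<Rightarrow> nat \<Rightarrow> nat set" where
  "Zset p c d = {0} \<union> {k. 1 \<le> k \<and> k \<le> topIdx p d \<and> c k = 0 \<and>
                           \<not> (c (k - 1) = 0 \<and> digit p d (k - 1) = p - 1)}"

text \<open>Successor of t in Z(c,d), i.e. t_{r+1} for t = t_r, with t_{l+1} = M+1.\<close>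
definition nextZ :: "nat \<Rightarrow> (nat \<Rightarrow> nat) \<Rightarrow> nat \<Rightarrow> nat \<Rightarrow> nat" where
  "nextZ p c d t = Min ({s \<in> Zset p c d. t < s} \<union> {topIdx p d + 1})"

definition Cont :: "nat \<Rightarrow> nat \<Rightarrow> nat \<Rightarrow> nat \<Rightarrow> nat" where
  "Cont p a s e = (\<Sum>k\<in>{s..<e}. digit p a k * p ^ (k - s))"

definition Aset :: "nat \<Rightarrow> (nat \<Rightarrow> nat) \<Rightarrow> nat \<Rightarrow> nat set" where
  "Aset p c d = {a. a \<le> d \<and> (\<forall>t \<in> Zset p c d.
        Cont p a t (nextZ p c d t) \<le> Cont p d t (nextZ p c d t))}"

end

theory Submission
  imports Defs
begin

text \<open>The carry into position l is 0 or 1, and it vanishes exactly when the last l digits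
  of a, read as a number, do not exceed those of d. Hence a carry pattern below c amounts
  to the inequalities a mod p^k \<le> d mod p^k at the positions k where c vanishes. Between
  two consecutive points t < t' of Z(c,d) these inequalities propagate through the block
  [t,t'): the one at t' holds iff the one at t holds and Cont(a_[t,t')) \<le> Cont(\<delta>_t).
  A vanishing carry at a position k \<notin> Z(c,d) sits above a digit d_{k-1} = p - 1 with
  vanishing carry at k - 1, where the inequality passes from k - 1 to k for free.\<close>

lemma digit_less: "0 < p \<Longrightarrow> digit p a j < p"
  by (simp add: digit_def)

lemma mod_power_Suc_digit: "x mod p ^ Suc l = digit p x l * p ^ l + x mod (p::nat) ^ l"
  using mod_mult2_eq[of x "p ^ l" p] by (simp add: digit_def power_Suc2 mult.commute)

lemma sum_digits_eq_mod: "(\<Sum>j<l. digit p x j * p ^ j) = x mod (p::nat) ^ l"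
  by (induction l) (simp_all add: mod_power_Suc_digit del: power_Suc)

lemma mod_power_eq_Cont:
  assumes "s \<le> e"
  shows "x mod p ^ e = Cont p x s e * p ^ s + x mod (p::nat) ^ s"
  using assms
proof (induction e rule: dec_induct)
  case base
  then show ?case by (simp add: Cont_def)
next
  case (step n)
  have "Cont p x s (Suc n) = Cont p x s n + digit p x n * p ^ (n - s)"
    using step.hyps(1) by (simp add: Cont_def)
  moreover have "p ^ (n - s) * p ^ s = p ^ n"
    using step.hyps(1) by (simp flip: power_add)
  ultimately show ?case
    using step.IH mod_power_Suc_digit[of x p n] by (simp add: algebra_simps)
qed

lemma finite_nonzero_digits:
  assumes "2 \<le> p"
  shows "finite {j. digit p d j \<noteq> 0}"
proof (rule finite_subset)
  show "{j. digit p d j \<noteq> 0} \<subseteq> {..<d}"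
  proof
    fix j assume "j \<in> {j. digit p d j \<noteq> 0}"
    then have "d div p ^ j \<noteq> 0"
      by (metis digit_def mod_0 mem_Collect_eq)
    then have "p ^ j \<le> d"
      by (simp add: div_eq_0_iff)
    then show "j \<in> {..<d}"
      using power_gt_expt[of p j] assms by simp
  qed
qed simp

lemma less_power_Suc_topIdx:
  assumes "2 \<le> p"
  shows "d < p ^ Suc (topIdx p d)"
proof -
  define M where "M = topIdx p d"
  have zero_above: "digit p d j = 0" if "M < j" for j
    using that Max_ge[OF finite_nonzero_digits[OF assms]] by (force simp: M_def topIdx_def)
  have stable: "d mod p ^ n = d mod p ^ Suc M" if "Suc M \<le> n" for n
    using that
    by (induction n rule: dec_induct) (simp_all add: mod_power_Suc_digit zero_above del: power_Suc)
  define n where "n = max d (Suc M)"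
  have "d < p ^ d"
    using power_gt_expt[of p d] assms by simp
  also have "\<dots> \<le> p ^ n"
    using assms by (intro power_increasing) (auto simp: n_def)
  finally have "d < p ^ n" .
  then have "d = d mod p ^ Suc M"
    using stable[of n] by (simp add: n_def)
  also have "\<dots> < p ^ Suc M"
    using assms by simp
  finally show ?thesis
    by (simp add: M_def)
qed

lemma carry_eq:
  assumes "0 < p" "a \<le> d" "1 \<le> l" "l \<le> topIdx p d"
  shows "carry p d a l = (if a mod p ^ l \<le> d mod p ^ l then 0 else 1)"
proof -
  define m where "m = p ^ l"
  define x y z where "x = a mod m" and "y = (d - a) mod m" and "z = d mod m"
  have "0 < m"
    using assms(1) by (simp add: m_def)
  then have "x < m" "y < m" "z < m"
    by (simp_all add: x_def y_def z_def)
  have "(x + y) mod m = z"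
    unfolding x_def y_def z_def using assms(2) by (metis le_add_diff_inverse mod_add_eq)
  then have sum: "x + y = z + m * ((x + y) div m)"
    by (metis mod_mult_div_eq add.commute mult.commute)
  have "(x + y) div m < 2"
    using \<open>x < m\<close> \<open>y < m\<close> by (simp add: less_mult_imp_div_less)
  moreover have "carry p d a l = (x + y - z) div m"
    using assms(3,4) unfolding carry_def
    by (simp add: sum_digits_eq_mod x_def y_def z_def m_def distrib_right sum.distrib)
  ultimately have "carry p d a l = (if x \<le> z then 0 else 1)"
    using sum \<open>0 < m\<close> \<open>y < m\<close> \<open>z < m\<close> by (cases "(x + y) div m") auto
  then show ?thesis
    by (simp add: x_def z_def m_def)
qed

lemma carry_le_iff_mod_le:
  assumes "0 < p" "a \<le> d"
  shows "carry_le (carry p d a) c \<longleftrightarrow>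
    (\<forall>k. 1 \<le> k \<and> k \<le> topIdx p d \<and> c k = 0 \<longrightarrow> a mod p ^ k \<le> d mod p ^ k)"
proof -
  have "carry p d a l \<le> c l \<longleftrightarrow>
      (1 \<le> l \<and> l \<le> topIdx p d \<and> c l = 0 \<longrightarrow> a mod p ^ l \<le> d mod p ^ l)" for l
    using carry_eq[OF assms, of l] by (cases "1 \<le> l \<and> l \<le> topIdx p d") (auto simp: carry_def)
  then show ?thesis
    by (simp add: carry_le_def)
qed

lemma Cont_le_if_mod_le:
  assumes "0 < p" "t \<le> n" "a mod p ^ n \<le> d mod p ^ n"
  shows "Cont p a t n \<le> Cont p d t n"
proof -
  have "Cont p a t n * p ^ t \<le> Cont p a t n * p ^ t + a mod p ^ t"
    by simp
  also have "\<dots> \<le> Cont p d t n * p ^ t + d mod p ^ t"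
    using assms(2,3) by (simp add: mod_power_eq_Cont)
  also have "\<dots> < (Cont p d t n + 1) * p ^ t"
    using assms(1) by simp
  finally show ?thesis
    using mult_right_less_imp_less by fastforce
qed

lemma mod_le_if_Cont_le:
  assumes "t \<le> n" "a mod p ^ t \<le> d mod p ^ t" "Cont p a t n \<le> Cont p d t n"
  shows "a mod p ^ n \<le> d mod (p::nat) ^ n"
proof -
  have "Cont p a t n * p ^ t \<le> Cont p d t n * p ^ t"
    using assms(3) by (rule mult_right_mono) simp
  then show ?thesis
    using assms(2) mod_power_eq_Cont[OF assms(1), of a p] mod_power_eq_Cont[OF assms(1), of d p]
    by linarith
qed

lemma Zset_subset_atMost: "Zset p c d \<subseteq> {..topIdx p d}"
  by (auto simp: Zset_def)

lemma finite_Zset: "finite (Zset p c d)"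
  using Zset_subset_atMost by (rule finite_subset) simp

lemma zero_in_Zset: "0 \<in> Zset p c d"
  by (simp add: Zset_def)

lemma nextZ_greater_and_in:
  assumes "t \<in> Zset p c d"
  shows "t < nextZ p c d t \<and> (nextZ p c d t \<in> Zset p c d \<or> nextZ p c d t = Suc (topIdx p d))"
proof -
  define B where "B = {s \<in> Zset p c d. t < s} \<union> {Suc (topIdx p d)}"
  have "finite B" "B \<noteq> {}"
    using finite_Zset by (simp_all add: B_def)
  have "t < Suc (topIdx p d)"
    using assms Zset_subset_atMost by fastforce
  then have "t < Min B"
    using \<open>finite B\<close> \<open>B \<noteq> {}\<close> by (simp add: Min_gr_iff B_def)
  moreover have "Min B \<in> B"
    using \<open>finite B\<close> \<open>B \<noteq> {}\<close> by (rule Min_in)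
  moreover have "nextZ p c d t = Min B"
    by (simp add: nextZ_def B_def)
  ultimately show ?thesis
    unfolding B_def by auto
qed

lemma nextZ_predecessor:
  assumes "k \<in> Zset p c d" "0 < k"
  obtains t where "t \<in> Zset p c d" "t < k" "nextZ p c d t = k"
proof -
  define T where "T = Zset p c d \<inter> {..<k}"
  have "finite T" "0 \<in> T"
    using finite_Zset zero_in_Zset assms(2) by (auto simp: T_def)
  define t where "t = Max T"
  have "t \<in> T"
    using Max_in[OF \<open>finite T\<close>] \<open>0 \<in> T\<close> by (auto simp: t_def)
  have "k \<le> topIdx p d"
    using assms(1) Zset_subset_atMost by blast
  have "nextZ p c d t = k"
    unfolding nextZ_def
  proof (rule Min_eqI)
    show "k \<in> {s \<in> Zset p c d. t < s} \<union> {topIdx p d + 1}"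
      using assms(1) \<open>t \<in> T\<close> by (auto simp: T_def)
  next
    fix s assume "s \<in> {s \<in> Zset p c d. t < s} \<union> {topIdx p d + 1}"
    then show "k \<le> s"
      using Max_ge[OF \<open>finite T\<close>, of s] \<open>k \<le> topIdx p d\<close> by (fastforce simp: T_def t_def)
  qed (simp add: finite_Zset)
  with \<open>t \<in> T\<close> show ?thesis
    by (intro that[of t]) (simp_all add: T_def)
qed

lemma mod_le_on_Zset_iff_Aset:
  assumes "2 \<le> p" "a \<le> d"
  shows "(\<forall>k \<in> Zset p c d. a mod p ^ k \<le> d mod p ^ k) \<longleftrightarrow> a \<in> Aset p c d"
proof
  assume Z: "\<forall>k \<in> Zset p c d. a mod p ^ k \<le> d mod p ^ k"
  have "d < p ^ Suc (topIdx p d)"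
    using less_power_Suc_topIdx[OF assms(1)] .
  then have top: "a mod p ^ Suc (topIdx p d) \<le> d mod p ^ Suc (topIdx p d)"
    using assms(2) by (simp del: power_Suc)
  show "a \<in> Aset p c d"
    unfolding Aset_def
  proof (intro CollectI conjI ballI assms(2))
    fix t assume "t \<in> Zset p c d"
    then have "t < nextZ p c d t"
      and "nextZ p c d t \<in> Zset p c d \<or> nextZ p c d t = Suc (topIdx p d)"
      using nextZ_greater_and_in by blast+
    moreover from this(2) have "a mod p ^ nextZ p c d t \<le> d mod p ^ nextZ p c d t"
      using Z top by (elim disjE) simp_all
    ultimately show "Cont p a t (nextZ p c d t) \<le> Cont p d t (nextZ p c d t)"
      using assms(1) by (intro Cont_le_if_mod_le) simp_all
  qed
next
  assume A: "a \<in> Aset p c d"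
  have "a mod p ^ k \<le> d mod p ^ k" if "k \<in> Zset p c d" for k
    using that
  proof (induction k rule: less_induct)
    case (less k)
    show ?case
    proof (cases "k = 0")
      case True
      then show ?thesis
        by simp
    next
      case False
      then obtain t where t: "t \<in> Zset p c d" "t < k" "nextZ p c d t = k"
        using nextZ_predecessor[OF less.prems] by auto
      have "Cont p a t k \<le> Cont p d t k"
        using A t(1,3) by (auto simp: Aset_def)
      then show ?thesis
        by (rule mod_le_if_Cont_le[OF less_imp_le[OF t(2)] less.IH[OF t(2,1)]])
    qed
  qed
  then show "\<forall>k \<in> Zset p c d. a mod p ^ k \<le> d mod p ^ k"
    by blast
qed

lemma mod_le_at_zero_carries:
  assumes "0 < p" and Z: "\<forall>k \<in> Zset p c d. a mod p ^ k \<le> d mod p ^ k"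
    and "1 \<le> k" "k \<le> topIdx p d" "c k = 0"
  shows "a mod p ^ k \<le> d mod p ^ k"
  using assms(3-5)
proof (induction k)
  case (Suc k)
  show ?case
  proof (cases "Suc k \<in> Zset p c d")
    case True
    then show ?thesis
      using Z by blast
  next
    case False
    with Suc.prems have "c k = 0" "digit p d k = p - 1"
      by (auto simp: Zset_def)
    moreover have "a mod p ^ k \<le> d mod p ^ k"
      using Suc.IH Suc.prems \<open>c k = 0\<close> by (cases k) auto
    moreover have "digit p a k \<le> p - 1"
      using digit_less[OF assms(1), of a k] by linarith
    ultimately show ?thesis
      unfolding mod_power_Suc_digit by (intro add_mono mult_right_mono) simp_all
  qed
qed simp

theorem mainTheorem11:
  fixes p d a :: nat and c :: "nat \<Rightarrow> nat"
  assumes "prime p" and "1 \<le> d" and "c \<in> carryPatterns d p" and "a \<le> d"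
  shows "carry_le (carry p d a) c \<longleftrightarrow> a \<in> Aset p c d"
proof -
  have p: "2 \<le> p"
    using assms(1) prime_ge_2_nat by blast
  have "carry_le (carry p d a) c \<longleftrightarrow>
      (\<forall>k. 1 \<le> k \<and> k \<le> topIdx p d \<and> c k = 0 \<longrightarrow> a mod p ^ k \<le> d mod p ^ k)"
    using carry_le_iff_mod_le[OF _ assms(4)] p by simp
  also have "\<dots> \<longleftrightarrow> (\<forall>k \<in> Zset p c d. a mod p ^ k \<le> d mod p ^ k)"
  proof
    assume "\<forall>k. 1 \<le> k \<and> k \<le> topIdx p d \<and> c k = 0 \<longrightarrow> a mod p ^ k \<le> d mod p ^ k"
    then show "\<forall>k \<in> Zset p c d. a mod p ^ k \<le> d mod p ^ k"
      by (auto simp: Zset_def)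
  next
    assume "\<forall>k \<in> Zset p c d. a mod p ^ k \<le> d mod p ^ k"
    then show "\<forall>k. 1 \<le> k \<and> k \<le> topIdx p d \<and> c k = 0 \<longrightarrow> a mod p ^ k \<le> d mod p ^ k"
      using mod_le_at_zero_carries[of p] p by simp
  qed
  also have "\<dots> \<longleftrightarrow> a \<in> Aset p c d"
    using mod_le_on_Zset_iff_Aset[OF p assms(4)] .
  finally show ?thesis .
qed

end
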